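(* Let $\mathbf k=(k_1,\ldots,k_r)\in\mathbb N^r$, $\mathbf m=(m_1,\ldots,m_p)\in\mathbb N^p$, $\boldsymbol\eta=(\eta_1,\ldots,\eta_r)\in\{\pm1\}^r$, $\boldsymbol\varepsilon=(\varepsilon_1,\ldots,\varepsilon_p)\in\{\pm1\}^p$, $|x|<1$, and put $\underline\eta=\eta_1\cdots\eta_r$, $n_0:=n$. Then \[ \mathrm{Mi}_{m_p,\ldots,m_1,k_1+1,k_2,\ldots,k_r}\big(\underline\eta\,\mathbf q(\boldsymbol\varepsilon),\mathbf p(\boldsymbol\eta);x\big) =(-1)^p\sum_{n=1}^\infty\frac{M_{n-1}\big(k_2,\ldots,k_r;\mathbf p(\eta_2,\ldots,\eta_r)\big)}{n^{k_1+1}}\big(1+\underline\eta(-1)^n\big)\sum_{n\ge n_1\ge\cdots\ge n_p\ge1}x^{n_p}\prod_{j=1}^p\frac{1+\varepsilon_j(-1)^{n_{j-1}+n_j}}{n_j^{m_j}} \] \[ -\sum_{j=1}^p(-1)^j\,\mathrm{Mi}_{m_p,\ldots,m_j}\big(-\mathbf q(\varepsilon_{j+1},\ldots,\varepsilon_p),-1;x\big)\,M\Big(\big(\mathbf k;\mathbf p(\boldsymbol\eta)\big)\circledast\big(1,m_1,\ldots,m_{j-1};-\mathbf p(\varepsilon_1,\ldots,\varepsilon_j)\big)^\star\Big) \] \[ -\sum_{j=1}^p(-1)^j\,\mathrm{Mi}_{m_p,\ldots,m_j}\big(\mathbf q(\varepsilon_{j+1},\ldots,\varepsilon_p),1;x\big)\,M\Big(\big(\mathbf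 k;\mathbf p(\boldsymbol\eta)\big)\circledast\big(1,m_1,\ldots,m_{j-1};\mathbf p(\varepsilon_1,\ldots,\varepsilon_j)\big)^\star\Big), \] where for $j=p$ the sign vector of $\mathrm{Mi}$ is just $(-1)$ resp. $(1)$. (The sign vector on the left is the concatenation of $\underline\eta\,\mathbf q(\boldsymbol\varepsilon)$, of length $p$, and $\mathbf p(\boldsymbol\eta)$, of length $r$.)
   Context: For $\boldsymbol\varepsilon=(\varepsilon_1,\ldots,\varepsilon_r)\in\{\pm1\}^r$: $\mathbf p(\boldsymbol\varepsilon)=(\varepsilon_1\cdots\varepsilon_r,\varepsilon_2\cdots\varepsilon_r,\ldots,\varepsilon_r)$, $\mathbf q(\boldsymbol\varepsilon)=(\varepsilon_1\cdots\varepsilon_r,\varepsilon_1\cdots\varepsilon_{r-1},\ldots,\varepsilon_1)$, empty for empty input; $a\boldsymbol\varepsilon=(a\varepsilon_1,\ldots,a\varepsilon_r)$. $M_n(\mathbf k;\boldsymbol\varepsilon)=\sum_{n\ge n_1>\cdots>n_r>0}\prod_j(1+\varepsilon_j(-1)^{n_j})/n_j^{k_j}$ and $M^\star_n(\mathbf k;\boldsymbol\varepsilon)=\sum_{n\ge n_1\ge\cdots\ge n_r\ge1}\prod_j(1+\varepsilon_j(-1)^{n_j})/n_j^{k_j}$, both $=1$ for empty index, $M_0$ of a nonempty index $=0$. $\mathrm{Mi}_{\mathbf k}(\boldsymbol\varepsilon;x)=\sum_{n_1>\cdots>n_r>0}x^{n_1}\prod_j(1+\varepsilon_j(-1)^{n_j})/n_j^{k_j}$.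 Convoluted multiple mixed value: for $\mathbf k\in\mathbb N^r$, $\mathbf l\in\mathbb N^s$, $\boldsymbol\eta\in\{\pm1,0\}\times\{\pm1\}^{r-1}$, $\boldsymbol\varepsilon\in\{\pm1,0\}\times\{\pm1\}^{s-1}$, $(\eta_1,\varepsilon_1)\ne(0,0)$: $M((\mathbf k;\boldsymbol\eta)\circledast(\mathbf l;\boldsymbol\varepsilon)^\star)=\sum_{n\ge1}\frac{M_{n-1}(k_2,\ldots,k_r;\eta_2,\ldots,\eta_r)M^\star_n(l_2,\ldots,l_s;\varepsilon_2,\ldots,\varepsilon_s)}{n^{k_1+l_1}}\cdot\frac{(1+\varepsilon_1(-1)^n)(1+\eta_1(-1)^n)}{2}$. *)

theory Defs
  imports "HOL-Analysis.Analysis"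
begin

fun pvec :: "int list \<Rightarrow> int list" where
  "pvec [] = []"
| "pvec (e # es) = (e * prod_list es) # pvec es"

definition qvec :: "int list \<Rightarrow> int list" where
  "qvec es = map (\<lambda>i. prod_list (take (length es - i) es)) [0..<length es]"

definition fac :: "int \<Rightarrow> nat \<Rightarrow> nat \<Rightarrow> real" where
  "fac e n k = (1 + of_int e * (-1) ^ n) / (of_nat n) ^ k"

fun Mfin :: "nat \<Rightarrow> nat list \<Rightarrow> int list \<Rightarrow> real" where
  "Mfin n [] [] = 1"
| "Mfin n (k # ks) (e # es) = (\<Sum>n1=1..n. fac e n1 k * Mfin (n1 - 1) ks es)"
| "Mfin n _ _ = 0"

fun Mstar :: "nat \<Rightarrow> nat list \<Rightarrow> int list \<Rightarrow> real" where
  "Mstar n [] [] = 1"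
| "Mstar n (k # ks) (e # es) = (\<Sum>n1=1..n. fac e n1 k * Mstar n1 ks es)"
| "Mstar n _ _ = 0"

fun Mi :: "nat list \<Rightarrow> int list \<Rightarrow> complex \<Rightarrow> complex" where
  "Mi [] [] x = 1"
| "Mi (k # ks) (e # es) x =
     (\<Sum>n. x ^ (n + 1) * of_real (fac e (n + 1) k * Mfin n ks es))"
| "Mi _ _ x = 0"

definition Mconv :: "nat list \<Rightarrow> int list \<Rightarrow> nat list \<Rightarrow> int list \<Rightarrow> real" where
  "Mconv k eta l eps =
     (\<Sum>n. (let N = n + 1 in
        Mfin (N - 1) (tl k) (tl eta) * Mstar N (tl l) (tl eps)
          / (of_nat N) ^ (hd k + hd l)
          * ((1 + of_int (hd eps) * (-1) ^ N) * (1 + of_int (hd eta) * (-1) ^ N) / 2)))"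

fun Sx :: "complex \<Rightarrow> nat \<Rightarrow> nat list \<Rightarrow> int list \<Rightarrow> complex" where
  "Sx x prev [] [] = x ^ prev"
| "Sx x prev (m # ms) (e # es) =
     (\<Sum>nj=1..prev. of_real ((1 + of_int e * (-1) ^ (prev + nj)) / (of_nat nj) ^ m) * Sx x nj ms es)"
| "Sx x prev _ _ = 0"

end

theory Submission
  imports Defs
begin

text \<open>
  Splitting the left-hand side at the index k_1 + 1 writes it as \<Sum>_n A(n) T(n), where
  A(n) = fac \<eta> n (k_1 + 1) M_{n-1}(k_2, ...; p(\<eta>_2, ...)) and T(n) is the sum of x^N_p over
  n < N_1 < ... < N_p. As A(n) vanishes unless \<eta> = (-1)^n, the signs \<eta> q(\<epsilon>) of the outer
  variables become the relative parities 1 + \<epsilon>_j (-1)^(N_{j-1} + N_j). Now replace each sum over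
  N_j > N_{j-1}, innermost first, by the complete sum over N_j \<ge> 1 minus the sum over N_j \<le> N_{j-1},
  and split every complete sum by the parity of N_j. The fully truncated term is the inner sum of
  the theorem; the j-th correction is a complete tail, i.e. an Mi with signs \<mp>q(\<epsilon>_{j+1}, ...),
  times a finite star sum which, summed against A(n), is a convoluted value. All rearrangements
  are justified by absolute convergence: A(n) = O((log n)^(r-1) / n^2), and the finite star sums
  are O((log n)^p).
\<close>

lemma prod_list_sign: "set es \<subseteq> {1, -1} \<Longrightarrow> prod_list es \<in> {1, -1 :: int}"
  by (induction es) auto

lemma length_pvec [simp]: "length (pvec es) = length es"
  by (induction es) auto

lemma pvec_signs: "set es \<subseteq> {1, -1} \<Longrightarrow> set (pvec es) \<subseteq> {1, -1 :: int}"
  by (induction es) (use prod_list_sign in fastforce)+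

lemma hd_pvec: "es \<noteq> [] \<Longrightarrow> hd (pvec es) = prod_list es"
  by (cases es) auto

lemma pvec_eq_Cons: "es \<noteq> [] \<Longrightarrow> pvec es = prod_list es # tl (pvec es)"
  by (cases es) auto

lemma tl_pvec: "tl (pvec es) = pvec (tl es)"
  by (cases es) auto

fun prefix_prods :: "int list \<Rightarrow> int list" where
  "prefix_prods [] = []"
| "prefix_prods (e # es) = e # map ((*) e) (prefix_prods es)"

lemma length_prefix_prods [simp]: "length (prefix_prods es) = length es"
  by (induction es) auto

lemma prefix_prods_signs: "set es \<subseteq> {1, -1} \<Longrightarrow> set (prefix_prods es) \<subseteq> {1, -1}"
  by (induction es) auto

lemma nth_prefix_prods: "i < length es \<Longrightarrow> prefix_prods es ! i = prod_list (take (Suc i) es)"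
  by (induction es arbitrary: i) (auto simp: nth_Cons split: nat.split)

lemma rev_prefix_prods: "rev (prefix_prods es) = qvec es"
proof (rule nth_equalityI)
  show "length (rev (prefix_prods es)) = length (qvec es)"
    by (simp add: qvec_def)
  fix i assume "i < length (rev (prefix_prods es))"
  then have i: "i < length es" by simp
  then have "qvec es ! i = prod_list (take (Suc (length es - Suc i)) es)"
    by (simp add: qvec_def Suc_diff_Suc)
  with i show "rev (prefix_prods es) ! i = qvec es ! i"
    by (simp add: rev_nth nth_prefix_prods)
qed

lemma sign_factor_nonzero_imp_parity:
  "c \<in> {1, -1} \<Longrightarrow> 1 + real_of_int c * (-1) ^ n \<noteq> 0 \<Longrightarrow> c = (-1) ^ n"
  by (cases "even n") auto

lemma fac_nonzero_imp_parity: "c \<in> {1, -1} \<Longrightarrow> fac c N m \<noteq> 0 \<Longrightarrow> c = (-1) ^ N"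
  unfolding fac_def by (rule sign_factor_nonzero_imp_parity) auto

lemma fac_mult_parity_factor:
  assumes "c \<in> {1, -1}"
  shows "fac c N m * (1 + a * (-1) ^ N) = fac c N m * (1 + a * of_int c)"
proof (cases "fac c N m = 0")
  case False
  then have "c = (-1) ^ N"
    by (rule fac_nonzero_imp_parity[OF assms])
  then show ?thesis
    by simp
qed simp

lemma fac_parity_split: "fac c N m = (\<Sum>s\<in>{-1, 1}. (1 + of_int (s * c)) / 2 * fac s N m)"
  by (cases "even N") (simp_all add: fac_def field_split_simps)

lemma abs_half_sign_factor_le: "c \<in> {1, -1} \<Longrightarrow> \<bar>(1 + of_int c * (-1) ^ n) / 2\<bar> \<le> (1 :: real)"
  by (cases "even n") auto

lemma abs_fac_le_inverse_power:
  assumes "e \<in> {1, -1}" "1 \<le> N" "j \<le> m"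
  shows "\<bar>fac e N m\<bar> \<le> 2 / real N ^ j"
proof -
  have "\<bar>1 + real_of_int e * (-1) ^ N\<bar> \<le> 2"
    using assms(1) by (cases "even N") auto
  moreover have "real N ^ j \<le> real N ^ m"
    using assms by (intro power_increasing) auto
  ultimately show ?thesis
    using assms(2) unfolding fac_def abs_divide
    by (intro frac_le) auto
qed

lemma abs_fac_le: "e \<in> {1, -1} \<Longrightarrow> \<bar>fac e N m\<bar> \<le> 2"
  using abs_fac_le_inverse_power[of e N 0 m] by (cases "N = 0"; cases m) (auto simp: fac_def)

section \<open>Tail series\<close>

text \<open>
  With constant signs it is a tail of Mi; with the signs e_j (-1)^N_{j-1}
  its factors are those of the inner sum Sx, but with the summations running upwards.
\<close>

fun tail_series :: "complex \<Rightarrow> nat \<Rightarrow> nat list \<Rightarrow> (nat \<Rightarrow> int) list \<Rightarrow> complex" where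
  "tail_series x n [] [] = x ^ n"
| "tail_series x n (m # ms) (\<sigma> # \<sigma>s) =
     (\<Sum>k. of_real (fac (\<sigma> n) (k + Suc n) m) * tail_series x (k + Suc n) ms \<sigma>s)"
| "tail_series x n _ _ = 0"

abbreviation Mi_tail :: "complex \<Rightarrow> nat \<Rightarrow> nat list \<Rightarrow> int list \<Rightarrow> complex" where
  "Mi_tail x n ms ss \<equiv> tail_series x n ms (map (\<lambda>s _. s) ss)"

abbreviation parity_tail :: "complex \<Rightarrow> nat \<Rightarrow> nat list \<Rightarrow> int list \<Rightarrow> complex" where
  "parity_tail x n ms es \<equiv> tail_series x n ms (map (\<lambda>e a. e * (-1) ^ a) es)"

lemma constant_sign_funs: "set ss \<subseteq> {1, -1} \<Longrightarrow> \<forall>\<sigma>\<in>set (map (\<lambda>s _. s) ss). \<forall>a. \<sigma> a \<in> {1, -1 :: int}"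
  by auto

lemma parity_sign_funs:
  "set es \<subseteq> {1, -1} \<Longrightarrow> \<forall>\<sigma>\<in>set (map (\<lambda>e a. e * (-1) ^ a) es). \<forall>a. \<sigma> a \<in> {1, -1 :: int}"
  by (auto simp: minus_one_power_iff)

lemma norm_tail_series_le:
  assumes "norm x < 1" and "\<forall>\<sigma>\<in>set \<sigma>s. \<forall>a. \<sigma> a \<in> {1, -1}"
  shows "norm (tail_series x n ms \<sigma>s) \<le> (2 / (1 - norm x)) ^ length ms * norm x ^ n"
  using assms
proof (induction x n ms \<sigma>s rule: tail_series.induct)
  case (1 x n)
  then show ?case by (simp add: norm_power)
next
  case (2 x n m ms \<sigma> \<sigma>s)
  define r where "r = norm x"
  define C where "C = (2 / (1 - r)) ^ length ms"
  have r: "0 \<le> r" "r < 1" and C: "0 \<le> C"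
    using "2.prems" by (auto simp: r_def C_def)
  have term_le: "norm (of_real (fac (\<sigma> n) (k + Suc n) m) * tail_series x (k + Suc n) ms \<sigma>s)
      \<le> 2 * C * r ^ Suc n * r ^ k" for k
  proof -
    have "norm (tail_series x (k + Suc n) ms \<sigma>s) \<le> C * r ^ (k + Suc n)"
      using "2" by (simp add: C_def r_def)
    moreover have "\<bar>fac (\<sigma> n) (k + Suc n) m\<bar> \<le> 2"
      using "2.prems" by (intro abs_fac_le) auto
    ultimately have "\<bar>fac (\<sigma> n) (k + Suc n) m\<bar> * norm (tail_series x (k + Suc n) ms \<sigma>s)
        \<le> 2 * (C * r ^ (k + Suc n))"
      by (intro mult_mono) auto
    then show ?thesis
      by (simp add: norm_mult power_add mult_ac)
  qed
  have "norm (tail_series x n (m # ms) (\<sigma> # \<sigma>s)) \<le> (\<Sum>k. 2 * C * r ^ Suc n * r ^ k)"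
    using r by (simp only: tail_series.simps) (intro norm_suminf_le term_le summable_mult summable_geometric; simp)
  also have "\<dots> = 2 * C * r ^ Suc n / (1 - r)"
    using r by (simp add: suminf_mult suminf_geometric divide_inverse)
  also have "\<dots> \<le> 2 * C * r ^ n / (1 - r)"
    using r C by (intro divide_right_mono mult_left_mono power_decreasing) auto
  finally show ?case
    by (simp add: C_def r_def)
qed auto

lemma summable_tail_series:
  assumes "norm x < 1" and "\<forall>\<sigma>\<in>set \<sigma>s. \<forall>a. \<sigma> a \<in> {1, -1}" and "\<And>k. \<bar>c k\<bar> \<le> B"
  shows "summable (\<lambda>k. of_real (c k) * tail_series x (k + j) ms \<sigma>s)"
proof (rule summable_comparison_test'[where N = 0])
  define r where "r = norm x"
  define C where "C = (2 / (1 - r)) ^ length ms"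
  have r: "0 \<le> r" "r < 1" and C: "0 \<le> C"
    using assms(1) by (auto simp: r_def C_def)
  show "summable (\<lambda>k. B * C * r ^ j * r ^ k)"
    using r by (intro summable_mult summable_geometric) auto
  fix k
  have "norm (tail_series x (k + j) ms \<sigma>s) \<le> C * r ^ (k + j)"
    using norm_tail_series_le[OF assms(1,2)] by (simp add: C_def r_def)
  then have "\<bar>c k\<bar> * norm (tail_series x (k + j) ms \<sigma>s) \<le> B * (C * r ^ (k + j))"
    using assms(3)[of k] by (intro mult_mono) auto
  then show "norm (of_real (c k) * tail_series x (k + j) ms \<sigma>s) \<le> B * C * r ^ j * r ^ k"
    by (simp add: norm_mult power_add mult_ac)
qed

section \<open>Double series over a triangle\<close>

lemma summable_power_mult_geometric:
  fixes r :: real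
  assumes "\<bar>r\<bar> < 1"
  shows "summable (\<lambda>n. real n ^ a * r ^ n)"
  using assms
proof (induction a arbitrary: r)
  case (Suc a)
  have "summable (\<lambda>n. diffs (\<lambda>n. real n ^ a) n * r ^ n)"
    by (rule termdiff_converges[of r 1]) (use Suc in auto)
  then have "summable (\<lambda>n. r * (real (Suc n) ^ Suc a * r ^ n))"
    by (intro summable_mult) (simp add: diffs_def)
  then have "summable (\<lambda>n. real (Suc n) ^ Suc a * r ^ Suc n)"
    by (simp add: mult_ac)
  then show ?case
    using summable_Suc_iff[where f = "\<lambda>n. real n ^ Suc a * r ^ n"] by simp
qed simp

lemma summable_triangle_power_geometric:
  fixes f :: "nat \<Rightarrow> nat \<Rightarrow> 'a::real_normed_vector"
  assumes "0 \<le> r" "r < 1" and "\<And>n i. n < i \<Longrightarrow> norm (f n i) \<le> K * (real i ^ L * r ^ i)"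
  shows "summable (\<lambda>i. \<Sum>n<i. norm (f n i))"
proof (rule summable_comparison_test'[where N = 0])
  show "summable (\<lambda>i. K * (real i ^ Suc L * r ^ i))"
    using assms(1,2) by (intro summable_mult summable_power_mult_geometric) auto
  fix i
  have "(\<Sum>n<i. norm (f n i)) \<le> (\<Sum>n<i. K * (real i ^ L * r ^ i))"
    using assms(3) by (intro sum_mono) auto
  then show "norm (\<Sum>n<i. norm (f n i)) \<le> K * (real i ^ Suc L * r ^ i)"
    by (simp add: sum_nonneg mult_ac)
qed

lemma suminf_triangle_swap:
  fixes f :: "nat \<Rightarrow> nat \<Rightarrow> complex"
  assumes "summable (\<lambda>i. \<Sum>n<i. norm (f n i))"
  shows "(\<Sum>i. \<Sum>n<i. f n i) = (\<Sum>n. \<Sum>k. f n (k + Suc n))"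
proof -
  define F where "F i n = (if n < i then f n i else 0)" for i n
  have infsum_nat: "infsum g UNIV = suminf g" if "g summable_on UNIV" for g :: "nat \<Rightarrow> complex"
    using that by (metis has_sum_imp_sums has_sum_infsum sums_unique)
  have row_sum: "((\<lambda>n. norm (F i n)) has_sum (\<Sum>n<i. norm (f n i))) UNIV" for i
  proof -
    have "((\<lambda>n. norm (F i n)) has_sum (\<Sum>n<i. norm (F i n))) {..<i}"
      by (rule has_sum_finite) simp
    then have "((\<lambda>n. norm (F i n)) has_sum (\<Sum>n<i. norm (f n i))) {..<i}"
      by (simp add: F_def)
    then show ?thesis
      by (subst has_sum_cong_neutral[where T = "{..<i}" and g = "\<lambda>n. norm (F i n)"]) (auto simp: F_def)
  qed
  have row_sums: "(\<lambda>i. \<Sum>n<i. norm (f n i)) summable_on UNIV"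
    using assms by (subst summable_on_UNIV_nonneg_real_iff) (auto intro: sum_nonneg)
  have abs_F: "(\<lambda>(i, n). norm (F i n)) summable_on UNIV \<times> UNIV"
    by (rule summable_on_SigmaI[where f = "\<lambda>(i, n). norm (F i n)" and g = "\<lambda>i. \<Sum>n<i. norm (f n i)"])
      (simp_all add: row_sum row_sums)
  have F: "(\<lambda>(i, n). F i n) summable_on UNIV \<times> UNIV"
    by (rule abs_summable_summable, rule summable_on_cong[THEN iffD1, OF _ abs_F]) auto
  have F': "(\<lambda>(n, i). F i n) summable_on UNIV \<times> UNIV"
    using F summable_on_swap[of "\<lambda>(i, n). F i n" UNIV UNIV] by (simp add: case_prod_beta)
  have rows: "infsum (F i) UNIV = (\<Sum>n<i. f n i)" for i
  proof -
    have "infsum (F i) UNIV = infsum (F i) {..<i}"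
      by (rule infsum_cong_neutral) (auto simp: F_def)
    then show ?thesis
      by (simp add: F_def)
  qed
  have cols: "infsum (\<lambda>i. F i n) UNIV = (\<Sum>k. f n (k + Suc n))" for n
  proof -
    have col: "(\<lambda>i. F i n) summable_on UNIV"
      using summable_on_SigmaD1[OF F', of n] by simp
    have "infsum (\<lambda>i. F i n) UNIV = (\<Sum>i. F i n)"
      by (rule infsum_nat[OF col])
    also have "\<dots> = (\<Sum>k. F (k + Suc n) n) + (\<Sum>i<Suc n. F i n)"
      using col by (intro suminf_split_initial_segment summable_on_imp_summable)
    finally show ?thesis
      by (simp add: F_def)
  qed
  have "(\<Sum>i. \<Sum>n<i. f n i) = infsum (\<lambda>i. infsum (F i) UNIV) UNIV"
    using infsum_nat[OF summable_on_Sigma_banach[OF F]] by (simp add: rows)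
  also have "\<dots> = infsum (\<lambda>n. infsum (\<lambda>i. F i n) UNIV) UNIV"
    using infsum_swap_banach[OF F] by simp
  also have "\<dots> = (\<Sum>n. \<Sum>k. f n (k + Suc n))"
    using infsum_nat[OF summable_on_Sigma_banach[OF F']] by (simp add: cols)
  finally show ?thesis .
qed

section \<open>\<open>Mi\<close> as a series of tails\<close>

lemma abs_Mfin_le_power:
  assumes "set es \<subseteq> {1, -1}"
  shows "\<bar>Mfin n ks es\<bar> \<le> (2 * real n) ^ length ks"
  using assms
proof (induction n ks es rule: Mfin.induct)
  case (2 n k ks e es)
  have "\<bar>Mfin n (k # ks) (e # es)\<bar> \<le> (\<Sum>n1=1..n. \<bar>fac e n1 k\<bar> * \<bar>Mfin (n1 - 1) ks es\<bar>)"
    by (simp add: abs_mult[symmetric])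
  also have "\<dots> \<le> (\<Sum>n1=1..n. 2 * (2 * real n) ^ length ks)"
  proof (rule sum_mono)
    fix n1 assume n1: "n1 \<in> {1..n}"
    have "\<bar>Mfin (n1 - 1) ks es\<bar> \<le> (2 * real (n1 - 1)) ^ length ks"
      using "2" n1 by simp
    also have "\<dots> \<le> (2 * real n) ^ length ks"
      using n1 by (intro power_mono) auto
    finally show "\<bar>fac e n1 k\<bar> * \<bar>Mfin (n1 - 1) ks es\<bar> \<le> 2 * (2 * real n) ^ length ks"
      using abs_fac_le "2.prems" by (intro mult_mono) auto
  qed
  also have "\<dots> = (2 * real n) ^ length (k # ks)"
    by simp
  finally show ?case .
qed auto

lemma abs_fac_mult_Mfin_le_power:
  assumes "t \<in> {1, -1}" "set ts \<subseteq> {1, -1}" "n \<le> i"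
  shows "\<bar>fac t (Suc n) b * Mfin n bs ts\<bar> \<le> 2 * (2 * real i) ^ length bs"
proof -
  have "\<bar>Mfin n bs ts\<bar> \<le> (2 * real n) ^ length bs"
    by (rule abs_Mfin_le_power[OF assms(2)])
  also have "\<dots> \<le> (2 * real i) ^ length bs"
    using assms(3) by (intro power_mono) auto
  finally show ?thesis
    unfolding abs_mult using abs_fac_le[OF assms(1)] by (intro mult_mono) auto
qed

lemma Mi_append_eq_suminf_Mi_tail:
  assumes x: "norm x < 1"
  shows "length ms = length ss \<Longrightarrow> set ss \<subseteq> {1, -1} \<Longrightarrow> set t \<subseteq> {1, -1} \<Longrightarrow>
    b \<noteq> [] \<Longrightarrow> length b = length t \<Longrightarrow>
    Mi (rev ms @ b) (rev ss @ t) x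
      = (\<Sum>i. of_real (fac (hd t) (Suc i) (hd b) * Mfin i (tl b) (tl t)) * Mi_tail x (Suc i) ms ss)"
proof (induction ms ss arbitrary: b t rule: list_induct2)
  case Nil
  then obtain b1 b' t1 t' where "b = b1 # b'" "t = t1 # t'"
    by (metis length_0_conv list.exhaust)
  then show ?case
    by (simp add: mult.commute)
next
  case (Cons m ms s ss)
  obtain b1 b' t1 t' where bt: "b = b1 # b'" "t = t1 # t'"
    using Cons.prems by (metis length_0_conv list.exhaust)
  have s: "s \<in> {1, -1}" and ss: "set ss \<subseteq> {1, -1}" and t1: "t1 \<in> {1, -1}" and t': "set t' \<subseteq> {1, -1}"
    using Cons.prems bt by auto
  define g where "g n = fac t1 (Suc n) b1 * Mfin n b' t'" for n
  define f where "f n i = of_real (g n) * (of_real (fac s (Suc i) m) * Mi_tail x (Suc i) ms ss)" for n i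
  have IH: "Mi (rev ms @ m # b) (rev ss @ s # t) x = (\<Sum>i. \<Sum>n<i. f n i)"
  proof -
    have "of_real (fac s (Suc i) m * Mfin i b t) * Mi_tail x (Suc i) ms ss = (\<Sum>n<i. f n i)" for i
      by (simp add: bt f_def g_def sum.atLeast1_atMost_eq sum_distrib_left sum_distrib_right mult_ac)
    then show ?thesis
      using Cons.IH[of "s # t" "m # b"] Cons.prems by simp
  qed
  define r where "r = norm x"
  define C where "C = (2 / (1 - r)) ^ length ms"
  define K where "K = 4 * 2 ^ length b' * C"
  have r: "0 \<le> r" "r < 1" and C: "0 \<le> C"
    using x by (auto simp: r_def C_def)
  have f_le: "norm (f n i) \<le> K * (real i ^ length b' * r ^ i)" if "n < i" for n i
  proof -
    have g_le: "\<bar>g n\<bar> \<le> 2 * (2 * real i) ^ length b'"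
      unfolding g_def using that by (intro abs_fac_mult_Mfin_le_power t1 t') auto
    have "norm (Mi_tail x (Suc i) ms ss) \<le> C * r ^ Suc i"
      unfolding C_def r_def by (rule norm_tail_series_le[OF x constant_sign_funs[OF ss]])
    also have "\<dots> \<le> C * r ^ i"
      using r C by (intro mult_left_mono power_decreasing) auto
    finally have tail_le: "\<bar>fac s (Suc i) m\<bar> * norm (Mi_tail x (Suc i) ms ss) \<le> 2 * (C * r ^ i)"
      using abs_fac_le[OF s] by (intro mult_mono) auto
    have "\<bar>g n\<bar> * (\<bar>fac s (Suc i) m\<bar> * norm (Mi_tail x (Suc i) ms ss))
        \<le> (2 * (2 * real i) ^ length b') * (2 * (C * r ^ i))"
      by (rule mult_mono[OF g_le tail_le]) auto
    then show ?thesis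
      by (simp add: f_def norm_mult K_def power_mult_distrib mult_ac)
  qed
  have "summable (\<lambda>i. \<Sum>n<i. norm (f n i))"
    by (rule summable_triangle_power_geometric[OF r f_le])
  then have "(\<Sum>i. \<Sum>n<i. f n i) = (\<Sum>n. \<Sum>k. f n (k + Suc n))"
    by (rule suminf_triangle_swap)
  also have "\<dots> = (\<Sum>n. of_real (g n) * Mi_tail x (Suc n) (m # ms) (s # ss))"
  proof -
    have "summable (\<lambda>k. of_real (fac s (k + Suc (Suc n)) m) * Mi_tail x (k + Suc (Suc n)) ms ss)" for n
      using abs_fac_le[OF s] by (intro summable_tail_series[OF x constant_sign_funs[OF ss]])
    then show ?thesis
      by (simp add: f_def suminf_mult)
  qed
  finally show ?case
    using IH by (simp add: g_def bt)
qed

lemma Mi_rev_eq_Mi_tail: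
  assumes "norm x < 1" "ms \<noteq> []" "length ms = length ss" "set ss \<subseteq> {1, -1}"
  shows "Mi (rev ms) (rev ss) x = Mi_tail x 0 ms ss"
proof -
  obtain m ms' s ss' where ms: "ms = m # ms'" "ss = s # ss'"
    using assms(2,3) by (metis length_0_conv list.exhaust)
  have "Mi (rev ms' @ [m]) (rev ss' @ [s]) x
      = (\<Sum>i. of_real (fac s (Suc i) m * Mfin i [] []) * Mi_tail x (Suc i) ms' ss')"
    using Mi_append_eq_suminf_Mi_tail[OF assms(1), of ms' ss' "[s]" "[m]"] assms ms by simp
  then show ?thesis
    by (simp add: ms)
qed

lemma Mi_tail_prefix_prods:
  assumes "length ms = length es" "set es \<subseteq> {1, -1}"
  shows "Mi_tail x n ms (map ((*) ((-1) ^ n)) (prefix_prods es)) = parity_tail x n ms es"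
  using assms
proof (induction ms es arbitrary: n rule: list_induct2)
  case (Cons m ms e es)
  define c where "c = e * (-1) ^ n"
  have c: "c \<in> {1, -1}"
    using Cons.prems by (auto simp: c_def minus_one_power_iff)
  have IH: "Mi_tail x N ms (map ((*) ((-1) ^ N)) (prefix_prods es)) = parity_tail x N ms es" for N
    using Cons.prems by (intro Cons.IH) auto
  \<comment> \<open>fac c N m vanishes unless c = (-1)^N, which turns the constant sign c into a parity\<close>
  have term_eq: "of_real (fac c N m) * Mi_tail x N ms (map ((*) c) (prefix_prods es))
      = of_real (fac c N m) * parity_tail x N ms es" for N
  proof (cases "fac c N m = 0")
    case False
    then have "c = (-1) ^ N"
      by (rule fac_nonzero_imp_parity[OF c])
    then show ?thesis
      by (simp only: IH)
  qed simp
  have "map ((*) ((-1) ^ n)) (prefix_prods (e # es)) = c # map ((*) c) (prefix_prods es)"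
    by (simp add: c_def mult.assoc mult.commute)
  then have "Mi_tail x n (m # ms) (map ((*) ((-1) ^ n)) (prefix_prods (e # es)))
      = (\<Sum>k. of_real (fac c (k + Suc n) m) * Mi_tail x (k + Suc n) ms (map ((*) c) (prefix_prods es)))"
    by (simp only: list.map tail_series.simps)
  also have "\<dots> = parity_tail x n (m # ms) (e # es)"
    unfolding term_eq by (simp only: list.map tail_series.simps c_def)
  finally show ?case .
qed simp

lemma Mi_eq_suminf_parity_tail:
  assumes "norm x < 1" "length ms = length es" "set es \<subseteq> {1, -1}" "set t \<subseteq> {1, -1}"
    "b \<noteq> []" "length b = length t"
  shows "Mi (rev ms @ b) (map ((*) (hd t)) (qvec es) @ t) x
    = (\<Sum>i. of_real (fac (hd t) (Suc i) (hd b) * Mfin i (tl b) (tl t)) * parity_tail x (Suc i) ms es)"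
proof -
  have t: "hd t \<in> {1, -1}"
    using assms(4-6) by (cases t) auto
  have "map ((*) (hd t)) (qvec es) = rev (map ((*) (hd t)) (prefix_prods es))"
    by (simp add: rev_map rev_prefix_prods)
  moreover have "set (map ((*) (hd t)) (prefix_prods es)) \<subseteq> {1, -1}"
    using t prefix_prods_signs[OF assms(3)] by auto
  ultimately have "Mi (rev ms @ b) (map ((*) (hd t)) (qvec es) @ t) x
    = (\<Sum>i. of_real (fac (hd t) (Suc i) (hd b) * Mfin i (tl b) (tl t))
             * Mi_tail x (Suc i) ms (map ((*) (hd t)) (prefix_prods es)))"
    using Mi_append_eq_suminf_Mi_tail assms by simp
  also have "\<dots> = (\<Sum>i. of_real (fac (hd t) (Suc i) (hd b) * Mfin i (tl b) (tl t)) * parity_tail x (Suc i) ms es)"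
  proof (intro suminf_cong)
    fix i
    show "of_real (fac (hd t) (Suc i) (hd b) * Mfin i (tl b) (tl t))
             * Mi_tail x (Suc i) ms (map ((*) (hd t)) (prefix_prods es))
        = of_real (fac (hd t) (Suc i) (hd b) * Mfin i (tl b) (tl t)) * parity_tail x (Suc i) ms es"
    proof (cases "fac (hd t) (Suc i) (hd b) = 0")
      case False
      then have "hd t = (-1) ^ Suc i"
        by (rule fac_nonzero_imp_parity[OF t])
      then show ?thesis
        using Mi_tail_prefix_prods[OF assms(2,3), of x "Suc i"] by simp
    qed simp
  qed
  finally show ?thesis .
qed

lemma parity_tail_zero_eq_Mi:
  assumes "norm x < 1" "length ms = Suc (length es)" "set es \<subseteq> {1, -1}" "s \<in> {1, -1}"
  shows "parity_tail x 0 ms (s # es) = Mi (rev ms) (map ((*) s) (qvec es) @ [s]) x"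
proof -
  have signs: "set (prefix_prods (s # es)) \<subseteq> {1, -1}"
    using assms(3,4) by (intro prefix_prods_signs) auto
  have unit_sign: "map ((*) ((-1) ^ 0)) (prefix_prods (s # es)) = prefix_prods (s # es)"
    by (simp add: map_idI)
  have "Mi_tail x 0 ms (map ((*) ((-1) ^ 0)) (prefix_prods (s # es))) = parity_tail x 0 ms (s # es)"
    using assms by (intro Mi_tail_prefix_prods) auto
  then have "parity_tail x 0 ms (s # es) = Mi_tail x 0 ms (prefix_prods (s # es))"
    by (simp only: unit_sign)
  also have "\<dots> = Mi (rev ms) (rev (prefix_prods (s # es))) x"
    using assms signs by (intro Mi_rev_eq_Mi_tail[symmetric]) auto
  also have "rev (prefix_prods (s # es)) = map ((*) s) (qvec es) @ [s]"
    by (simp add: rev_map rev_prefix_prods)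
  finally show ?thesis .
qed

section \<open>Truncating the tails\<close>

lemma Sx_Cons:
  "Sx x n (m # ms) (e # es) = (\<Sum>N=1..n. of_real (fac (e * (-1) ^ n) N m) * Sx x N ms es)"
  by (simp add: fac_def power_add mult.assoc)

definition parity_star :: "nat \<Rightarrow> nat list \<Rightarrow> int list \<Rightarrow> real" where
  "parity_star n ms es = Re (Sx 1 n ms es)"

lemma parity_star_Nil [simp]: "parity_star n [] [] = 1"
  by (simp add: parity_star_def)

lemma parity_star_Cons:
  "parity_star n (m # ms) (e # es) = (\<Sum>N=1..n. fac (e * (-1) ^ n) N m * parity_star N ms es)"
  unfolding parity_star_def Sx_Cons by simp

text \<open>
  The j-th correction term of parity_tail x n: the first j - 1 summations are truncated to
  N_i \<le> N_{i-1}, the j-th runs over all N_j \<ge> 1 split according to the parity of N_j, and the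
  remaining ones are tails again.
\<close>

definition split_term :: "complex \<Rightarrow> nat \<Rightarrow> nat \<Rightarrow> nat list \<Rightarrow> int list \<Rightarrow> complex" where
  "split_term x j n ms es =
     (\<Sum>s\<in>{-1, 1}. parity_tail x 0 (drop (j - 1) ms) (s # drop j es)
        * of_real ((1 + of_int (s * prod_list (take j es)) * (-1) ^ n) / 2
                   * parity_star n (take (j - 1) ms) (take (j - 1) es)))"

lemma sum_fac_split_term:
  assumes "1 \<le> j" "e \<in> {1, -1}"
  shows "(\<Sum>N=1..n. of_real (fac (e * (-1) ^ n) N m) * split_term x j N ms es)
    = split_term x (Suc j) n (m # ms) (e # es)"
proof -
  obtain i where j: "j = Suc i"
    using assms(1) by (cases j) auto
  define c where "c = e * (-1) ^ n"
  define P where "P = prod_list (take j es)"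
  define V where "V s = parity_tail x 0 (drop i ms) (s # drop j es)" for s
  define w where "w N = parity_star N (take i ms) (take i es)" for N
  have c: "c \<in> {1, -1}"
    using assms(2) by (auto simp: c_def minus_one_power_iff)
  have parity_shift: "fac c N m * ((1 + of_int (s * P) * (-1) ^ N) / 2 * w N)
      = (1 + of_int (s * (e * P)) * (-1) ^ n) / 2 * (fac c N m * w N)" for s N
  proof -
    have "fac c N m * (1 + of_int (s * P) * (-1) ^ N) = fac c N m * (1 + of_int (s * P) * of_int c)"
      by (rule fac_mult_parity_factor[OF c])
    also have "\<dots> = fac c N m * (1 + of_int (s * (e * P)) * (-1) ^ n)"
      by (simp add: c_def algebra_simps)
    finally have shifted: "fac c N m * (1 + of_int (s * P) * (-1) ^ N)
        = fac c N m * (1 + of_int (s * (e * P)) * (-1) ^ n)" .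
    have "fac c N m * ((1 + of_int (s * P) * (-1) ^ N) / 2 * w N)
        = fac c N m * (1 + of_int (s * P) * (-1) ^ N) * w N / 2"
      by simp
    also have "\<dots> = fac c N m * (1 + of_int (s * (e * P)) * (-1) ^ n) * w N / 2"
      by (simp only: shifted)
    also have "\<dots> = (1 + of_int (s * (e * P)) * (-1) ^ n) / 2 * (fac c N m * w N)"
      by simp
    finally show ?thesis .
  qed
  have summand: "of_real (fac c N m) * split_term x j N ms es
      = (\<Sum>s\<in>{-1, 1}. V s * of_real ((1 + of_int (s * (e * P)) * (-1) ^ n) / 2 * (fac c N m * w N)))" for N
  proof -
    have split_j: "split_term x j N ms es = (\<Sum>s\<in>{-1, 1}. V s * of_real ((1 + of_int (s * P) * (-1) ^ N) / 2 * w N))"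
      by (simp only: split_term_def V_def w_def P_def j diff_Suc_1)
    have "of_real (fac c N m) * split_term x j N ms es
        = (\<Sum>s\<in>{-1, 1}. V s * of_real (fac c N m * ((1 + of_int (s * P) * (-1) ^ N) / 2 * w N)))"
      unfolding split_j sum_distrib_left by (intro sum.cong refl) (simp only: of_real_mult mult.left_commute)
    then show ?thesis
      by (simp only: parity_shift)
  qed
  have star: "(\<Sum>N=1..n. fac c N m * w N) = parity_star n (take j (m # ms)) (take j (e # es))"
    by (simp add: j w_def c_def parity_star_Cons)
  have "(\<Sum>N=1..n. of_real (fac c N m) * split_term x j N ms es)
      = (\<Sum>s\<in>{-1, 1}. V s * of_real ((1 + of_int (s * (e * P)) * (-1) ^ n) / 2 * (\<Sum>N=1..n. fac c N m * w N)))"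
    unfolding summand by (subst sum.swap) (simp add: sum_distrib_left)
  also have "\<dots> = split_term x (Suc j) n (m # ms) (e # es)"
    unfolding star
    by (simp only: split_term_def V_def P_def j diff_Suc_1 drop_Suc_Cons take_Suc_Cons prod_list.Cons)
  finally show ?thesis
    by (simp only: c_def)
qed

lemma summable_fac_parity_tail:
  assumes "norm x < 1" "set es \<subseteq> {1, -1}" "s \<in> {1, -1}"
  shows "summable (\<lambda>k. of_real (fac s (Suc k) m) * parity_tail x (Suc k) ms es)"
  using summable_tail_series[OF assms(1) parity_sign_funs[OF assms(2)], of "\<lambda>k. fac s (Suc k) m" 2 1 ms]
    abs_fac_le[OF assms(3)]
  by simp

lemma suminf_fac_parity_tail_split:
  assumes "norm x < 1" "set es \<subseteq> {1, -1}"
  shows "(\<Sum>k. of_real (fac c (Suc k) m) * parity_tail x (Suc k) ms es)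
    = (\<Sum>s\<in>{-1, 1}. of_real ((1 + of_int (s * c)) / 2) * parity_tail x 0 (m # ms) (s # es))"
proof -
  have "(\<lambda>k. of_real (fac c (Suc k) m) * parity_tail x (Suc k) ms es)
      = (\<lambda>k. \<Sum>s\<in>{-1, 1}. of_real ((1 + of_int (s * c)) / 2) * (of_real (fac s (Suc k) m) * parity_tail x (Suc k) ms es))"
    by (rule ext, subst fac_parity_split[of c]) (simp add: algebra_simps)
  then have "(\<Sum>k. of_real (fac c (Suc k) m) * parity_tail x (Suc k) ms es)
      = (\<Sum>s\<in>{-1, 1}. \<Sum>k. of_real ((1 + of_int (s * c)) / 2) * (of_real (fac s (Suc k) m) * parity_tail x (Suc k) ms es))"
    using summable_fac_parity_tail[OF assms] by (simp only:) (intro suminf_sum summable_mult, auto)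
  also have "\<dots> = (\<Sum>s\<in>{-1, 1}. of_real ((1 + of_int (s * c)) / 2) * parity_tail x 0 (m # ms) (s # es))"
  proof (intro sum.cong refl)
    fix s :: int
    assume "s \<in> {-1, 1}"
    then have "summable (\<lambda>k. of_real (fac s (Suc k) m) * parity_tail x (Suc k) ms es)"
      by (intro summable_fac_parity_tail[OF assms]) auto
    moreover have "(\<Sum>k. of_real (fac s (Suc k) m) * parity_tail x (Suc k) ms es) = parity_tail x 0 (m # ms) (s # es)"
      by simp
    ultimately show "(\<Sum>k. of_real ((1 + of_int (s * c)) / 2) * (of_real (fac s (Suc k) m) * parity_tail x (Suc k) ms es))
        = of_real ((1 + of_int (s * c)) / 2) * parity_tail x 0 (m # ms) (s # es)"
      by (simp only: suminf_mult)
  qed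
  finally show ?thesis .
qed

lemma parity_tail_decomposition:
  assumes x: "norm x < 1"
  shows "length ms = length es \<Longrightarrow> set es \<subseteq> {1, -1} \<Longrightarrow>
    parity_tail x n ms es = (-1) ^ length ms * Sx x n ms es - (\<Sum>j=1..length ms. (-1) ^ j * split_term x j n ms es)"
proof (induction ms es arbitrary: n rule: list_induct2)
  case (Cons m ms e es)
  have e: "e \<in> {1, -1}" and es: "set es \<subseteq> {1, -1}"
    using Cons.prems by auto
  define c where "c = e * (-1) ^ n"
  define h where "h k = of_real (fac c (Suc k) m) * parity_tail x (Suc k) ms es" for k
  have c: "c \<in> {1, -1}"
    using e by (auto simp: c_def minus_one_power_iff)
  have "summable h"
    unfolding h_def by (rule summable_fac_parity_tail[OF x es c])
  then have "suminf h = (\<Sum>k. h (k + n)) + (\<Sum>k<n. h k)"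
    by (rule suminf_split_initial_segment)
  moreover have "parity_tail x n (m # ms) (e # es) = (\<Sum>k. h (k + n))"
    by (simp add: h_def c_def)
  ultimately have "parity_tail x n (m # ms) (e # es) = suminf h - (\<Sum>k<n. h k)"
    by simp
  moreover have "suminf h = split_term x 1 n (m # ms) (e # es)"
    unfolding h_def suminf_fac_parity_tail_split[OF x es] by (simp add: split_term_def c_def mult_ac)
  moreover have "(\<Sum>k<n. h k) = (-1) ^ length ms * Sx x n (m # ms) (e # es)
      - (\<Sum>j=1..length ms. (-1) ^ j * split_term x (Suc j) n (m # ms) (e # es))"
  proof -
    have "(\<Sum>k<n. h k) = (\<Sum>N=1..n. of_real (fac c N m) * parity_tail x N ms es)"
      by (simp add: h_def sum.atLeast1_atMost_eq)
    also have "\<dots> = (-1) ^ length ms * (\<Sum>N=1..n. of_real (fac c N m) * Sx x N ms es)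
        - (\<Sum>j=1..length ms. (-1) ^ j * (\<Sum>N=1..n. of_real (fac c N m) * split_term x j N ms es))"
      unfolding Cons.IH[OF es]
      by (simp add: algebra_simps sum_subtractf sum_distrib_left) (rule sum.swap)
    also have "\<dots> = (-1) ^ length ms * Sx x n (m # ms) (e # es)
        - (\<Sum>j=1..length ms. (-1) ^ j * split_term x (Suc j) n (m # ms) (e # es))"
      unfolding Sx_Cons c_def
      by (intro arg_cong2[where f = "(-)"] refl sum.cong arg_cong2[where f = "(*)"])
        (rule sum_fac_split_term[OF _ e], simp)
    finally show ?thesis .
  qed
  moreover have "(\<Sum>j=1..length (m # ms). (-1) ^ j * split_term x j n (m # ms) (e # es))
      = - split_term x 1 n (m # ms) (e # es) - (\<Sum>j=1..length ms. (-1) ^ j * split_term x (Suc j) n (m # ms) (e # es))"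
    unfolding length_Cons One_nat_def sum.atLeast1_atMost_eq sum.lessThan_Suc_shift by (simp add: sum_negf)
  ultimately show ?case
    by simp
qed simp

lemma of_real_mult_split_term:
  "of_real a * split_term x j N ms es
    = (\<Sum>s\<in>{-1, 1}. parity_tail x 0 (drop (j - 1) ms) (s # drop j es)
        * of_real (a * ((1 + of_int (s * prod_list (take j es)) * (-1) ^ N) / 2
                   * parity_star N (take (j - 1) ms) (take (j - 1) es))))"
  unfolding split_term_def sum_distrib_left by (intro sum.cong refl) (simp only: of_real_mult mult.left_commute)

lemma of_real_mult_parity_tail_decomposition:
  assumes "norm x < 1" "length ms = length es" "set es \<subseteq> {1, -1}"
  shows "of_real a * parity_tail x N ms es = (-1) ^ length ms * (of_real a * Sx x N ms es)
    - (\<Sum>j=1..length ms. (-1) ^ j * (\<Sum>s\<in>{-1, 1}. parity_tail x 0 (drop (j - 1) ms) (s # drop j es)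
        * of_real (a * ((1 + of_int (s * prod_list (take j es)) * (-1) ^ N) / 2
                   * parity_star N (take (j - 1) ms) (take (j - 1) es)))))"
proof -
  have "of_real a * parity_tail x N ms es = (-1) ^ length ms * (of_real a * Sx x N ms es)
      - (\<Sum>j=1..length ms. (-1) ^ j * (of_real a * split_term x j N ms es))"
    unfolding parity_tail_decomposition[OF assms] by (simp only: right_diff_distrib sum_distrib_left mult.left_commute)
  then show ?thesis
    by (simp only: of_real_mult_split_term)
qed

section \<open>Convoluted values\<close>

lemma Mstar_eq_parity_star:
  assumes "length ms = length es" "set es \<subseteq> {1, -1}" "\<theta> \<in> {1, -1}" "e \<in> {1, -1}"
  shows "(1 + of_int (\<theta> * prod_list (es @ [e])) * (-1) ^ n) * Mstar n ms (map ((*) \<theta>) (tl (pvec (es @ [e]))))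
    = (1 + of_int (\<theta> * prod_list (es @ [e])) * (-1) ^ n) * parity_star n ms es"
  using assms
proof (induction ms es arbitrary: n rule: list_induct2)
  case (Cons m ms e1 es)
  define Q where "Q = prod_list (es @ [e])"
  define c where "c = 1 + real_of_int (\<theta> * (e1 * Q)) * (-1) ^ n"
  have e1: "e1 \<in> {1, -1}" and es: "set es \<subseteq> {1, -1}"
    using Cons.prems by auto
  have Q: "\<theta> * Q \<in> {1, -1}"
    using prod_list_sign[of "es @ [e]"] Cons.prems by (auto simp: Q_def)
  have tl_pvec_Cons: "tl (pvec ((e1 # es) @ [e])) = Q # tl (pvec (es @ [e]))"
    using pvec_eq_Cons[of "es @ [e]"] by (simp add: Q_def)
  have summand: "c * (fac (\<theta> * Q) N m * Mstar N ms (map ((*) \<theta>) (tl (pvec (es @ [e])))))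
      = c * (fac (e1 * (-1) ^ n) N m * parity_star N ms es)" for N
  proof (cases "c = 0")
    case False
    then have "\<theta> * (e1 * Q) = (-1) ^ n"
      using e1 Q unfolding c_def by (intro sign_factor_nonzero_imp_parity) (auto simp: mult.left_commute)
    then have same_sign: "\<theta> * Q = e1 * (-1) ^ n"
      using e1 by (auto simp: algebra_simps)
    have "fac (\<theta> * Q) N m * Mstar N ms (map ((*) \<theta>) (tl (pvec (es @ [e]))))
        = fac (\<theta> * Q) N m * parity_star N ms es"
    proof (cases "fac (\<theta> * Q) N m = 0")
      case False
      then have "\<theta> * Q = (-1) ^ N"
        by (rule fac_nonzero_imp_parity[OF Q])
      then have "(1 + of_int (\<theta> * Q) * (-1) ^ N :: real) = 2"
        by simp
      then show ?thesis
        using Cons.IH[OF es Cons.prems(2,3), of N] by (simp add: Q_def)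
    qed simp
    then show ?thesis
      by (simp add: same_sign)
  qed simp
  have "c * Mstar n (m # ms) (map ((*) \<theta>) (tl (pvec ((e1 # es) @ [e]))))
      = (\<Sum>N=1..n. c * (fac (\<theta> * Q) N m * Mstar N ms (map ((*) \<theta>) (tl (pvec (es @ [e]))))))"
    unfolding tl_pvec_Cons by (simp add: sum_distrib_left)
  also have "\<dots> = c * parity_star n (m # ms) (e1 # es)"
    by (simp add: summand parity_star_Cons sum_distrib_left)
  finally show ?case
    by (simp add: c_def Q_def mult.assoc)
qed simp

lemma Mconv_eq_suminf_parity_star:
  assumes "k \<noteq> []" "eta \<noteq> []" "length ms = length es" "set es \<subseteq> {1, -1}" "\<theta> \<in> {1, -1}" "e \<in> {1, -1}"
  shows "Mconv k (pvec eta) (1 # ms) (map ((*) \<theta>) (pvec (es @ [e])))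
    = (\<Sum>i. fac (prod_list eta) (Suc i) (hd k + 1) * Mfin i (tl k) (pvec (tl eta))
          * ((1 + of_int (\<theta> * prod_list (es @ [e])) * (-1) ^ Suc i) / 2 * parity_star (Suc i) ms es))"
proof -
  have summand: "(let N = i + 1 in
      Mfin (N - 1) (tl k) (tl (pvec eta)) * Mstar N (tl (1 # ms)) (tl (map ((*) \<theta>) (pvec (es @ [e]))))
        / (of_nat N) ^ (hd k + hd (1 # ms))
        * ((1 + of_int (hd (map ((*) \<theta>) (pvec (es @ [e])))) * (-1) ^ N)
           * (1 + of_int (hd (pvec eta)) * (-1) ^ N) / 2))
    = fac (prod_list eta) (Suc i) (hd k + 1) * Mfin i (tl k) (pvec (tl eta))
      * ((1 + of_int (\<theta> * prod_list (es @ [e])) * (-1) ^ Suc i) / 2 * parity_star (Suc i) ms es)" for i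
  proof -
    define N where "N = Suc i"
    define P where "P = prod_list (es @ [e])"
    define c :: real where "c = 1 + of_int (\<theta> * P) * (-1) ^ N"
    define F where "F = Mfin i (tl k) (pvec (tl eta))"
    define H :: real where "H = 1 + of_int (prod_list eta) * (-1) ^ N"
    have pvec_app: "pvec (es @ [e]) = P # tl (pvec (es @ [e]))"
      using pvec_eq_Cons[of "es @ [e]"] by (simp add: P_def)
    have star: "c * Mstar N ms (map ((*) \<theta>) (tl (pvec (es @ [e])))) = c * parity_star N ms es"
      unfolding c_def P_def by (rule Mstar_eq_parity_star[OF assms(3-6)])
    have "(let N = i + 1 in
        Mfin (N - 1) (tl k) (tl (pvec eta)) * Mstar N (tl (1 # ms)) (tl (map ((*) \<theta>) (pvec (es @ [e]))))
          / (of_nat N) ^ (hd k + hd (1 # ms))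
          * ((1 + of_int (hd (map ((*) \<theta>) (pvec (es @ [e])))) * (-1) ^ N)
             * (1 + of_int (hd (pvec eta)) * (-1) ^ N) / 2))
        = F / real N ^ (hd k + 1) * H / 2 * (c * Mstar N ms (map ((*) \<theta>) (tl (pvec (es @ [e])))))"
      unfolding F_def H_def c_def N_def Let_def
      by (subst (1 2) pvec_app) (simp add: hd_pvec[OF assms(2)] tl_pvec field_simps)
    also have "\<dots> = fac (prod_list eta) N (hd k + 1) * F * (c / 2 * parity_star N ms es)"
      unfolding star by (simp add: fac_def H_def field_simps)
    finally show ?thesis
      by (simp add: N_def F_def c_def P_def)
  qed
  show ?thesis
    unfolding Mconv_def by (rule suminf_cong) (rule summand)
qed

section \<open>Harmonic bounds\<close>

lemma sum_divide_eq_harm: "(\<Sum>N=1..n. c / real N) = c * harm n"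
  by (simp add: harm_def sum_distrib_left divide_inverse)

lemma two_harm_power_mono: "m \<le> n \<Longrightarrow> (2 * harm m) ^ k \<le> (2 * harm n :: real) ^ k"
  by (intro power_mono mult_left_mono harm_mono) (auto simp: harm_nonneg)

lemma sum_abs_fac_mult_le_harm:
  assumes "e \<in> {1, -1}" "1 \<le> k" and g: "\<And>N. 1 \<le> N \<Longrightarrow> N \<le> n \<Longrightarrow> 0 \<le> g N \<and> g N \<le> B"
  shows "(\<Sum>N=1..n. \<bar>fac e N k\<bar> * g N) \<le> 2 * harm n * B"
proof -
  have "(\<Sum>N=1..n. \<bar>fac e N k\<bar> * g N) \<le> (\<Sum>N=1..n. 2 * B / real N)"
  proof (rule sum_mono)
    fix N assume N: "N \<in> {1..n}"
    have "\<bar>fac e N k\<bar> \<le> 2 / real N"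
      using abs_fac_le_inverse_power[OF assms(1) _ assms(2), of N] N by simp
    then have "\<bar>fac e N k\<bar> * g N \<le> 2 / real N * B"
      using g[of N] N by (intro mult_mono) auto
    then show "\<bar>fac e N k\<bar> * g N \<le> 2 * B / real N"
      by simp
  qed
  also have "\<dots> = 2 * harm n * B"
    unfolding sum_divide_eq_harm by simp
  finally show ?thesis .
qed

lemma abs_Mfin_le_harm:
  assumes "\<forall>k\<in>set ks. 1 \<le> k" "set es \<subseteq> {1, -1}"
  shows "\<bar>Mfin n ks es\<bar> \<le> (2 * harm n) ^ length ks"
  using assms
proof (induction n ks es rule: Mfin.induct)
  case (2 n k ks e es)
  have "\<bar>Mfin n (k # ks) (e # es)\<bar> \<le> (\<Sum>N=1..n. \<bar>fac e N k\<bar> * \<bar>Mfin (N - 1) ks es\<bar>)"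
    by (simp add: abs_mult[symmetric])
  also have "\<dots> \<le> 2 * harm n * (2 * harm n) ^ length ks"
  proof (rule sum_abs_fac_mult_le_harm)
    show "e \<in> {1, -1}" "1 \<le> k"
      using "2.prems" by auto
    fix N assume "1 \<le> N" "N \<le> n"
    then have "\<bar>Mfin (N - 1) ks es\<bar> \<le> (2 * harm (N - 1)) ^ length ks"
      using "2" by simp
    also have "\<dots> \<le> (2 * harm n) ^ length ks"
      using \<open>N \<le> n\<close> by (intro two_harm_power_mono) simp
    finally show "0 \<le> \<bar>Mfin (N - 1) ks es\<bar> \<and> \<bar>Mfin (N - 1) ks es\<bar> \<le> (2 * harm n) ^ length ks"
      by simp
  qed
  finally show ?case
    by simp
qed (auto intro!: mult_nonneg_nonneg zero_le_power harm_nonneg)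

lemma norm_Sx_le_harm:
  assumes "norm x \<le> 1" "\<forall>m\<in>set ms. 1 \<le> m" "set es \<subseteq> {1, -1}"
  shows "norm (Sx x n ms es) \<le> (2 * harm n) ^ length ms"
  using assms
proof (induction x n ms es rule: Sx.induct)
  case (1 x n)
  then show ?case
    by (simp add: norm_power power_le_one)
next
  case (2 x n m ms e es)
  have "norm (Sx x n (m # ms) (e # es)) \<le> (\<Sum>N=1..n. \<bar>fac (e * (-1) ^ n) N m\<bar> * norm (Sx x N ms es))"
    unfolding Sx_Cons by (rule order_trans[OF norm_sum]) (simp add: norm_mult)
  also have "\<dots> \<le> 2 * harm n * (2 * harm n) ^ length ms"
  proof (rule sum_abs_fac_mult_le_harm)
    show "e * (-1) ^ n \<in> {1, -1}" "1 \<le> m"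
      using "2.prems" by (auto simp: minus_one_power_iff)
    fix N assume "1 \<le> N" "N \<le> n"
    then have "norm (Sx x N ms es) \<le> (2 * harm N) ^ length ms"
      using "2" by simp
    also have "\<dots> \<le> (2 * harm n) ^ length ms"
      using \<open>N \<le> n\<close> by (rule two_harm_power_mono)
    finally show "0 \<le> norm (Sx x N ms es) \<and> norm (Sx x N ms es) \<le> (2 * harm n) ^ length ms"
      by simp
  qed
  finally show ?case
    by simp
qed (auto intro!: mult_nonneg_nonneg zero_le_power harm_nonneg)

lemma abs_parity_star_le_harm:
  "\<forall>m\<in>set ms. 1 \<le> m \<Longrightarrow> set es \<subseteq> {1, -1} \<Longrightarrow> \<bar>parity_star n ms es\<bar> \<le> (2 * harm n) ^ length ms"
  unfolding parity_star_def using norm_Sx_le_harm[of 1 ms es n] by (intro order_trans[OF abs_Re_le_cmod]) simp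

lemma abs_split_weight_le:
  assumes "c \<in> {1, -1}" "\<forall>m\<in>set ms. 1 \<le> m" "set es \<subseteq> {1, -1}"
  shows "\<bar>(1 + of_int c * (-1) ^ N) / 2 * parity_star N ms es\<bar> \<le> (2 * harm N) ^ length ms"
proof -
  have "\<bar>(1 + of_int c * (-1) ^ N) / 2\<bar> * \<bar>parity_star N ms es\<bar> \<le> 1 * (2 * harm N) ^ length ms"
    by (rule mult_mono[OF abs_half_sign_factor_le[OF assms(1)] abs_parity_star_le_harm[OF assms(2,3)]]) simp_all
  then show ?thesis
    by (simp add: abs_mult)
qed

lemma abs_fac_mult_Mfin_le_harm:
  assumes "e \<in> {1, -1}" "1 \<le> k" "\<forall>k\<in>set ks. 1 \<le> k" "set es \<subseteq> {1, -1}"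
  shows "\<bar>fac e (Suc i) (k + 1) * Mfin i ks es\<bar>
    \<le> 2 ^ Suc (length ks) * (harm (Suc i) ^ length ks / real (Suc i) ^ 2)"
proof -
  have "\<bar>fac e (Suc i) (k + 1)\<bar> \<le> 2 / real (Suc i) ^ 2"
    using assms(1,2) by (intro abs_fac_le_inverse_power) auto
  moreover have "\<bar>Mfin i ks es\<bar> \<le> (2 * harm (Suc i)) ^ length ks"
    by (rule order_trans[OF abs_Mfin_le_harm[OF assms(3,4)] two_harm_power_mono]) simp
  ultimately have "\<bar>fac e (Suc i) (k + 1)\<bar> * \<bar>Mfin i ks es\<bar> \<le> 2 / real (Suc i) ^ 2 * (2 * harm (Suc i)) ^ length ks"
    by (rule mult_mono) simp_all
  then show ?thesis
    by (simp add: abs_mult power_mult_distrib)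
qed

lemma harm_Suc_le_powr:
  assumes "0 < d"
  shows "harm (Suc n) \<le> (1 + 1 / d) * real (Suc n) powr d"
proof -
  define N where "N = real (Suc n)"
  have N: "1 \<le> N"
    by (simp add: N_def)
  have ln_le: "d * ln N \<le> N powr d - 1"
    using ln_le_minus_one[of "N powr d"] N by (simp add: ln_powr)
  have powr_ge: "d \<le> d * N powr d"
    using N assms mult_left_mono[of 1 "N powr d" d] by (simp add: ge_one_powr_ge_zero)
  have "harm (Suc n) \<le> ln N + 1"
    using euler_mascheroni_sequence_decreasing[of 1 "Suc n"] by (simp add: N_def harm_def)
  then have "d * harm (Suc n) \<le> d * ln N + d"
    using mult_left_mono[of "harm (Suc n)" "ln N + 1" d] assms by (simp add: distrib_left)
  also have "\<dots> \<le> d * N powr d + N powr d"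
    using ln_le powr_ge by linarith
  also have "\<dots> = d * ((1 + 1 / d) * N powr d)"
    using assms by (simp add: field_simps)
  finally show ?thesis
    using assms by (simp add: N_def)
qed

lemma summable_harm_power_over_square: "summable (\<lambda>n. harm (Suc n) ^ a / real (Suc n) ^ 2 :: real)"
proof (rule summable_comparison_test'[where N = 0])
  define d :: real where "d = 1 / (2 * (real a + 1))"
  define K where "K = (1 + 1 / d) ^ a"
  have d: "0 < d" "real a * d \<le> 1 / 2"
    by (auto simp: d_def field_simps)
  have "summable (\<lambda>n. real n powr (-3/2))"
    by (simp add: summable_real_powr_iff)
  then show "summable (\<lambda>n. K * real (Suc n) powr (-3/2))"
    by (intro summable_mult) (subst summable_Suc_iff)
  fix n
  define N where "N = real (Suc n)"
  have N: "1 \<le> N"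
    by (simp add: N_def)
  have "harm (Suc n) ^ a \<le> ((1 + 1 / d) * N powr d) ^ a"
    unfolding N_def by (intro power_mono harm_Suc_le_powr harm_nonneg d)
  also have "\<dots> = K * N powr (real a * d)"
    using N by (simp add: K_def power_mult_distrib powr_power mult.commute)
  also have "\<dots> \<le> K * N powr (1 / 2)"
    using d N by (intro mult_left_mono powr_mono) (auto simp: K_def)
  finally have "harm (Suc n) ^ a / N ^ 2 \<le> K * N powr (1 / 2) / N powr 2"
    using N by (simp add: divide_right_mono powr_realpow')
  also have "\<dots> = K * N powr (-3/2)"
    using powr_diff[of N "1 / 2" 2] by simp
  finally show "norm (harm (Suc n) ^ a / real (Suc n) ^ 2) \<le> K * real (Suc n) powr (-3/2)"
    by (simp add: N_def harm_nonneg)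
qed

lemma summable_harm_dominated:
  fixes f :: "nat \<Rightarrow> 'a::banach"
  assumes "\<And>n. norm (f n) \<le> C * (harm (Suc n) ^ a / real (Suc n) ^ 2) * (B * harm (Suc n)) ^ b"
  shows "summable f"
proof (rule summable_comparison_test'[where N = 0])
  show "summable (\<lambda>n. C * B ^ b * (harm (Suc n) ^ (a + b) / real (Suc n) ^ 2))"
    by (intro summable_mult summable_harm_power_over_square)
  show "norm (f n) \<le> C * B ^ b * (harm (Suc n) ^ (a + b) / real (Suc n) ^ 2)" for n
    using assms[of n] by (simp add: power_add power_mult_distrib mult_ac)
qed

lemma summable_harm_weighted:
  fixes w :: "nat \<Rightarrow> 'a::{banach, real_normed_field}"
  assumes a: "\<And>i. \<bar>a (Suc i)\<bar> \<le> C * (harm (Suc i) ^ R / real (Suc i) ^ 2)"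
    and w: "\<And>i. norm (w i) \<le> (2 * harm (Suc i)) ^ b"
  shows "summable (\<lambda>i. of_real (a (Suc i)) * w i)"
proof (rule summable_harm_dominated[where B = 2])
  fix i
  have "0 \<le> C"
    using a[of 0] abs_ge_zero[of "a 1"] by (simp add: harm_altdef)
  then have "\<bar>a (Suc i)\<bar> * norm (w i) \<le> C * (harm (Suc i) ^ R / real (Suc i) ^ 2) * (2 * harm (Suc i)) ^ b"
    using a[of i] w[of i] by (intro mult_mono) (simp_all add: harm_nonneg)
  then show "norm (of_real (a (Suc i)) * w i) \<le> C * (harm (Suc i) ^ R / real (Suc i) ^ 2) * (2 * harm (Suc i)) ^ b"
    by (simp add: norm_mult)
qed

lemma suminf_parity_tail_expansion:
  fixes a :: "nat \<Rightarrow> real"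
  assumes x: "norm x < 1" and ms: "\<forall>m\<in>set ms. 1 \<le> m" and len: "length ms = length es"
    and es: "set es \<subseteq> {1, -1}"
    and a: "\<And>i. \<bar>a (Suc i)\<bar> \<le> C * (harm (Suc i) ^ R / real (Suc i) ^ 2)"
  shows "(\<Sum>i. of_real (a (Suc i)) * parity_tail x (Suc i) ms es)
    = (-1) ^ length ms * (\<Sum>i. of_real (a (Suc i)) * Sx x (Suc i) ms es)
      - (\<Sum>j=1..length ms. (-1) ^ j * (\<Sum>s\<in>{-1, 1}. parity_tail x 0 (drop (j - 1) ms) (s # drop j es)
           * of_real (\<Sum>i. a (Suc i) * ((1 + of_int (s * prod_list (take j es)) * (-1) ^ Suc i) / 2
                * parity_star (Suc i) (take (j - 1) ms) (take (j - 1) es)))))"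
proof -
  define p where "p = length ms"
  define V where "V j s = parity_tail x 0 (drop (j - 1) ms) (s # drop j es)" for j s
  define w where "w j s N = (1 + of_int (s * prod_list (take j es)) * (-1) ^ N) / 2
    * parity_star N (take (j - 1) ms) (take (j - 1) es)" for j s N
  have termwise: "of_real (a N) * parity_tail x N ms es = (-1) ^ p * (of_real (a N) * Sx x N ms es)
      - (\<Sum>j=1..p. (-1) ^ j * (\<Sum>s\<in>{-1, 1}. V j s * of_real (a N * w j s N)))" for N
    unfolding V_def w_def p_def by (rule of_real_mult_parity_tail_decomposition[OF x len es])
  have take_signs: "set (take n es) \<subseteq> {1, -1}" for n
    by (rule order_trans[OF set_take_subset es])
  have w_le: "norm (w j s (Suc i)) \<le> (2 * harm (Suc i)) ^ (j - 1)" if j: "j \<in> {1..p}" and s: "s \<in> {-1, 1}" for j s i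
  proof -
    have "s * prod_list (take j es) \<in> {1, -1}"
      using s prod_list_sign[OF take_signs[of j]] by auto
    moreover have "\<forall>m\<in>set (take (j - 1) ms). 1 \<le> m"
      using ms by (meson in_set_takeD)
    ultimately have "norm (w j s (Suc i)) \<le> (2 * harm (Suc i)) ^ length (take (j - 1) ms)"
      unfolding w_def real_norm_def by (rule abs_split_weight_le[OF _ _ take_signs])
    moreover have "length (take (j - 1) ms) = j - 1"
      using j by (auto simp: p_def)
    ultimately show ?thesis
      by (simp only:)
  qed
  have "norm (Sx x (Suc i) ms es) \<le> (2 * harm (Suc i)) ^ length ms" for i
    using x by (intro norm_Sx_le_harm ms es) simp
  then have Sx_summable: "summable (\<lambda>i. of_real (a (Suc i)) * Sx x (Suc i) ms es)"
    by (rule summable_harm_weighted[OF a])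
  have w_sums: "(\<lambda>i. V j s * of_real (a (Suc i) * w j s (Suc i))) sums (V j s * of_real (\<Sum>i. a (Suc i) * w j s (Suc i)))"
    if "j \<in> {1..p}" "s \<in> {-1, 1}" for j s
  proof -
    have "summable (\<lambda>i. a (Suc i) * w j s (Suc i))"
      using summable_harm_weighted[OF a w_le[OF that]] by simp
    then have "(\<lambda>i. of_real (a (Suc i) * w j s (Suc i)) :: complex) sums of_real (\<Sum>i. a (Suc i) * w j s (Suc i))"
      unfolding sums_of_real_iff by (rule summable_sums)
    then show ?thesis
      by (rule sums_mult)
  qed
  have "(\<lambda>i. (-1) ^ p * (of_real (a (Suc i)) * Sx x (Suc i) ms es)
          - (\<Sum>j=1..p. (-1) ^ j * (\<Sum>s\<in>{-1, 1}. V j s * of_real (a (Suc i) * w j s (Suc i))))) sums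
      ((-1) ^ p * (\<Sum>i. of_real (a (Suc i)) * Sx x (Suc i) ms es)
       - (\<Sum>j=1..p. (-1) ^ j * (\<Sum>s\<in>{-1, 1}. V j s * of_real (\<Sum>i. a (Suc i) * w j s (Suc i)))))"
    by (rule sums_diff, rule sums_mult, rule summable_sums[OF Sx_summable],
        rule sums_sum, rule sums_mult, rule sums_sum, rule w_sums)
  then have "(\<lambda>i. of_real (a (Suc i)) * parity_tail x (Suc i) ms es) sums
      ((-1) ^ p * (\<Sum>i. of_real (a (Suc i)) * Sx x (Suc i) ms es)
       - (\<Sum>j=1..p. (-1) ^ j * (\<Sum>s\<in>{-1, 1}. V j s * of_real (\<Sum>i. a (Suc i) * w j s (Suc i)))))"
    by (simp only: termwise)
  then show ?thesis
    unfolding V_def w_def p_def by (rule sums_unique[symmetric])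
qed

lemma summed_correction_eq_Mi_Mconv:
  assumes x: "norm x < 1" and "k \<noteq> []" "eta \<noteq> []" "length m = length eps" "set eps \<subseteq> {1, -1}"
    and j: "j \<in> {1..length m}"
  shows "(\<Sum>s\<in>{-1, 1}. parity_tail x 0 (drop (j - 1) m) (s # drop j eps)
           * of_real (\<Sum>i. fac (prod_list eta) (Suc i) (hd k + 1) * Mfin i (tl k) (pvec (tl eta))
               * ((1 + of_int (s * prod_list (take j eps)) * (-1) ^ Suc i) / 2
                  * parity_star (Suc i) (take (j - 1) m) (take (j - 1) eps))))
    = Mi (rev (drop (j - 1) m)) (map uminus (qvec (drop j eps)) @ [-1]) x
        * of_real (Mconv k (pvec eta) (1 # take (j - 1) m) (map uminus (pvec (take j eps))))
      + Mi (rev (drop (j - 1) m)) (qvec (drop j eps) @ [1]) x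
        * of_real (Mconv k (pvec eta) (1 # take (j - 1) m) (pvec (take j eps)))"
proof -
  define e where "e = eps ! (j - 1)"
  have "take (Suc (j - 1)) eps = take (j - 1) eps @ [e]"
    unfolding e_def using j assms(4) by (intro take_Suc_conv_app_nth) auto
  then have take_j: "take j eps = take (j - 1) eps @ [e]"
    using j by simp
  have "e \<in> set eps"
    unfolding e_def using j assms(4) by (intro nth_mem) auto
  then have e: "e \<in> {1, -1}"
    using assms(5) by blast
  have tail_signs: "set (drop j eps) \<subseteq> {1, -1}"
    by (rule order_trans[OF set_drop_subset assms(5)])
  have head_signs: "set (take (j - 1) eps) \<subseteq> {1, -1}"
    by (rule order_trans[OF set_take_subset assms(5)])
  have tail_len: "length (drop (j - 1) m) = Suc (length (drop j eps))"
    using j assms(4) by (simp add: Suc_diff_le)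
  have head_len: "length (take (j - 1) m) = length (take (j - 1) eps)"
    using assms(4) by simp
  have sign_maps: "map ((*) (-1)) xs = map uminus xs" "map ((*) 1) xs = xs" for xs :: "int list"
    by (induction xs) auto
  have Mi_eqs:
    "parity_tail x 0 (drop (j - 1) m) ((-1) # drop j eps) = Mi (rev (drop (j - 1) m)) (map uminus (qvec (drop j eps)) @ [-1]) x"
    "parity_tail x 0 (drop (j - 1) m) (1 # drop j eps) = Mi (rev (drop (j - 1) m)) (qvec (drop j eps) @ [1]) x"
    using parity_tail_zero_eq_Mi[OF x tail_len tail_signs, of "-1"] parity_tail_zero_eq_Mi[OF x tail_len tail_signs, of 1]
    by (simp_all only: sign_maps insert_iff simp_thms)
  have Mconv_eqs:
    "Mconv k (pvec eta) (1 # take (j - 1) m) (map uminus (pvec (take j eps)))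
      = (\<Sum>i. fac (prod_list eta) (Suc i) (hd k + 1) * Mfin i (tl k) (pvec (tl eta))
          * ((1 + of_int (- 1 * prod_list (take j eps)) * (-1) ^ Suc i) / 2
             * parity_star (Suc i) (take (j - 1) m) (take (j - 1) eps)))"
    "Mconv k (pvec eta) (1 # take (j - 1) m) (pvec (take j eps))
      = (\<Sum>i. fac (prod_list eta) (Suc i) (hd k + 1) * Mfin i (tl k) (pvec (tl eta))
          * ((1 + of_int (1 * prod_list (take j eps)) * (-1) ^ Suc i) / 2
             * parity_star (Suc i) (take (j - 1) m) (take (j - 1) eps)))"
    using Mconv_eq_suminf_parity_star[OF assms(2,3) head_len head_signs _ e, of "-1"]
      Mconv_eq_suminf_parity_star[OF assms(2,3) head_len head_signs _ e, of 1]
    unfolding take_j by (simp_all only: sign_maps insert_iff simp_thms)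
  show ?thesis
    unfolding Mi_eqs[symmetric] Mconv_eqs by simp
qed

theorem mainTheorem10:
  fixes k m :: "nat list" and eta eps :: "int list" and x :: complex
  assumes "k \<noteq> []"
    and "\<forall>i\<in>set k. i \<ge> 1" and "\<forall>i\<in>set m. i \<ge> 1"
    and "length eta = length k" and "length eps = length m"
    and "\<forall>e\<in>set eta. e = 1 \<or> e = -1" and "\<forall>e\<in>set eps. e = 1 \<or> e = -1"
    and "norm x < 1"
  shows "Mi (rev m @ (hd k + 1) # tl k)
            (map (\<lambda>e. prod_list eta * e) (qvec eps) @ pvec eta) x
       = (-1) ^ length m *
           (\<Sum>n. (let N = n + 1 in
              of_real (Mfin (N - 1) (tl k) (pvec (tl eta)) / (of_nat N) ^ (hd k + 1)
                       * (1 + of_int (prod_list eta) * (-1) ^ N))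
              * Sx x N m eps))
         - (\<Sum>j=1..length m. (-1) ^ j
              * Mi (rev (drop (j - 1) m)) (map uminus (qvec (drop j eps)) @ [-1]) x
              * of_real (Mconv k (pvec eta) (1 # take (j - 1) m) (map uminus (pvec (take j eps)))))
         - (\<Sum>j=1..length m. (-1) ^ j
              * Mi (rev (drop (j - 1) m)) (qvec (drop j eps) @ [1]) x
              * of_real (Mconv k (pvec eta) (1 # take (j - 1) m) (pvec (take j eps))))"
proof -
  have eta: "eta \<noteq> []" "set eta \<subseteq> {1, -1}" and eps: "set eps \<subseteq> {1, -1}"
    using assms(1,4,6,7) by auto
  define A where "A N = fac (prod_list eta) N (hd k + 1) * Mfin (N - 1) (tl k) (pvec (tl eta))" for N
  have "prod_list eta \<in> {1, -1}" "1 \<le> hd k" "\<forall>k'\<in>set (tl k). 1 \<le> k'" "set (pvec (tl eta)) \<subseteq> {1, -1}"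
    using assms(1,2) eta prod_list_sign[OF eta(2)] pvec_signs[of "tl eta"] by (auto dest: list.set_sel(2))
  then have A_le: "\<bar>A (Suc i)\<bar> \<le> 2 ^ Suc (length (tl k)) * (harm (Suc i) ^ length (tl k) / real (Suc i) ^ 2)" for i
    unfolding A_def diff_Suc_1 by (rule abs_fac_mult_Mfin_le_harm)
  have "Mi (rev m @ (hd k + 1) # tl k) (map (\<lambda>e. prod_list eta * e) (qvec eps) @ pvec eta) x
      = (\<Sum>i. of_real (A (Suc i)) * parity_tail x (Suc i) m eps)"
    using Mi_eq_suminf_parity_tail[OF assms(8) assms(5)[symmetric] eps pvec_signs[OF eta(2)], of "(hd k + 1) # tl k"]
      assms(1,4) by (simp add: A_def hd_pvec[OF eta(1)] tl_pvec)
  also have "\<dots> = (-1) ^ length m * (\<Sum>i. of_real (A (Suc i)) * Sx x (Suc i) m eps)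
      - (\<Sum>j=1..length m. (-1) ^ j * (Mi (rev (drop (j - 1) m)) (map uminus (qvec (drop j eps)) @ [-1]) x
              * of_real (Mconv k (pvec eta) (1 # take (j - 1) m) (map uminus (pvec (take j eps))))
            + Mi (rev (drop (j - 1) m)) (qvec (drop j eps) @ [1]) x
              * of_real (Mconv k (pvec eta) (1 # take (j - 1) m) (pvec (take j eps)))))"
    unfolding suminf_parity_tail_expansion[OF assms(8,3) assms(5)[symmetric] eps A_le]
    by (intro arg_cong2[where f = "(-)"] refl sum.cong arg_cong2[where f = "(*)"])
      (simp only: A_def diff_Suc_1 summed_correction_eq_Mi_Mconv[OF assms(8,1) eta(1) assms(5)[symmetric] eps])
  finally show ?thesis
    by (simp add: A_def fac_def Let_def sum.distrib algebra_simps)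
qed

end
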